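(* Consider a one-parameter family of admissible vector fields of a feedforward network, with internal phase space $V$. If $V=\mathbb R$, then no linear admissible map (in particular no linearization at a fully synchronous equilibrium) has a pair of non-real complex conjugate eigenvalues; hence in a one-parameter bifurcation only real eigenvalues can cross the imaginary axis. On the other hand, if $\dim V\ge 2$, there are linear admissible maps with non-real complex conjugate eigenvalues, so that a one-parameter bifurcation in which a pair of complex conjugate eigenvalues crosses the imaginary axis is possible.
   Context: A homogeneous coupled cell network with asymmetric inputs consists of a finite set of cells $C$ and a set $\Sigma=\{\sigma_1,\dots,\sigma_n\}$ of pairwise distinct maps $\sigma\colon C\to C$ with $\sigma_1=\mathrm{Id}_C$; there is an arrow of type $\sigma$ from $q$ to $p$ iff $\sigma(p)=q$. A path from $p$ to $q$ is a set $\{p_1,\dots,p_k\}$ of pairwise distinct cells with $p_1=p$, $p_k=q$ and $\tau_j(p_{j+1})=p_j$ for some $\tau_j\in\Sigma$. A cycle of length $k$ is such a path with additionally $\tau(p_1)=p_k$ for some $\tau\in\Sigma$; the network is feedforward if it has no cycles of length $\ge2$. For a finite-dimensional real vector space $V$ (internal phase space) and $f\colon V^n\times\mathbb R\to V$, the admissible vector fields are $\gamma_f(x,\lambda)_p=f(x_{\sigma_1(p)},\dots,x_{\sigma_n(p)},\lambda)$ on $V^N$; linear admissible maps are $\gamma_{\mathfrak l}$ with $\mathfrak l\colon V^n\to V$ linear. *)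

theory Defs
  imports "HOL-Analysis.Analysis"
begin

text \<open>A homogeneous network with asymmetric inputs: cells are the elements of the finite
type 'c; the input types are indexed by the finite type 's via Sg :: 's => 'c => 'c,
pairwise distinct (inj Sg), and a distinguished index s1 with Sg s1 = id.
An arrow of type Sg s from q to p exists iff Sg s p = q.\<close>

definition network :: "('s::finite \<Rightarrow> 'c::finite \<Rightarrow> 'c) \<Rightarrow> 's \<Rightarrow> bool" where
  "network Sg s1 \<longleftrightarrow> inj Sg \<and> Sg s1 = id"

definition is_cycle :: "('s \<Rightarrow> 'c \<Rightarrow> 'c) \<Rightarrow> 'c list \<Rightarrow> bool" where
  "is_cycle Sg ps \<longleftrightarrow> ps \<noteq> [] \<and> distinct ps
     \<and> (\<forall>j. Suc j < length ps \<longrightarrow> (\<exists>s. Sg s (ps ! Suc j) = ps ! j))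
     \<and> (\<exists>s. Sg s (ps ! 0) = last ps)"

definition feedforward :: "('s \<Rightarrow> 'c \<Rightarrow> 'c) \<Rightarrow> bool" where
  "feedforward Sg \<longleftrightarrow> \<not> (\<exists>ps. is_cycle Sg ps \<and> length ps \<ge> 2)"

definition admissible :: "('s::finite \<Rightarrow> 'c::finite \<Rightarrow> 'c) \<Rightarrow> ('v^'s \<Rightarrow> 'v) \<Rightarrow> 'v^'c \<Rightarrow> 'v^'c" where
  "admissible Sg f x = (\<chi> p. f (\<chi> s. x $ (Sg s p)))"

text \<open>mu is a (complex) eigenvalue of the real linear map T, i.e. an eigenvalue of its
complexification T_C(u + i v) = T u + i T v, with eigenvector u + i v \<noteq> 0:
T u + i T v = mu (u + i v).\<close>

definition cplx_eigenvalue :: "('a::real_vector \<Rightarrow> 'a) \<Rightarrow> complex \<Rightarrow> bool" where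
  "cplx_eigenvalue T mu \<longleftrightarrow> (\<exists>u v. (u \<noteq> 0 \<or> v \<noteq> 0)
      \<and> T u = Re mu *\<^sub>R u - Im mu *\<^sub>R v
      \<and> T v = Im mu *\<^sub>R u + Re mu *\<^sub>R v)"

end

theory Submission
  imports Defs "HOL-Library.Transitive_Closure_Table"
begin

text \<open>For V = \<real>: order the cells by the input relation, which is well-founded for a
feedforward network, and take a minimal cell p in the support of a complex eigenvector u + i v.
All inputs of p other than p itself vanish, so at p the eigenvalue equation reduces to a
scalar equation c (u_p + i v_p) = mu (u_p + i v_p) with real c, forcing mu to be real.
For dim V \<ge> 2 the internal dynamics alone can rotate: letting every cell apply a
rotation by a right angle to its own state gives the eigenvalue i.\<close>

definition input_rel :: "('s \<Rightarrow> 'c \<Rightarrow> 'c) \<Rightarrow> ('c \<times> 'c) set" where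
  "input_rel Sg = {(q, p). q \<noteq> p \<and> (\<exists>s. Sg s p = q)}"

lemma acyclic_input_rel:
  assumes "feedforward Sg"
  shows "acyclic (input_rel Sg)"
  unfolding acyclic_def
proof (intro allI notI)
  fix x assume "(x, x) \<in> (input_rel Sg)\<^sup>+"
  then obtain y where xy: "(x, y) \<in> input_rel Sg" and "(y, x) \<in> (input_rel Sg)\<^sup>*"
    by (metis trancl_unfold_left relcomp.cases)
  then have "(\<lambda>a b. (a, b) \<in> input_rel Sg)\<^sup>*\<^sup>* y x"
    by (simp add: rtranclp_rtrancl_eq)
  then obtain xs where path: "rtrancl_path (\<lambda>a b. (a, b) \<in> input_rel Sg) y xs x"
    and dist: "distinct (y # xs)"
    by (metis rtranclp_eq_rtrancl_path rtrancl_path_distinct)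
  have "x \<noteq> y" using xy by (simp add: input_rel_def)
  then have "xs \<noteq> []" using path by (auto elim: rtrancl_path.cases)
  then have last: "last (y # xs) = x" and len: "length (y # xs) \<ge> 2"
    using rtrancl_path_last[OF path] by (auto simp: Suc_le_eq)
  have "is_cycle Sg (y # xs)"
    unfolding is_cycle_def
  proof (intro conjI allI impI)
    fix j assume "Suc j < length (y # xs)"
    then have "((y # xs) ! j, (y # xs) ! Suc j) \<in> input_rel Sg"
      using rtrancl_path_nth[OF path] by simp
    then show "\<exists>s. Sg s ((y # xs) ! Suc j) = (y # xs) ! j"
      by (simp add: input_rel_def)
  next
    show "\<exists>s. Sg s ((y # xs) ! 0) = last (y # xs)"
      using xy last by (simp add: input_rel_def)
  qed (use dist in simp_all)
  with len assms show False unfolding feedforward_def by blast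
qed

lemma wf_input_rel:
  fixes Sg :: "'s \<Rightarrow> 'c::finite \<Rightarrow> 'c"
  assumes "feedforward Sg"
  shows "wf (input_rel Sg)"
  by (rule finite_acyclic_wf[OF _ acyclic_input_rel[OF assms]]) simp

lemma linear_DIM_1_eq_scaleR:
  fixes g :: "'v::euclidean_space \<Rightarrow> 'v"
  assumes "DIM('v) = 1" and "linear g"
  obtains c where "\<And>x. g x = c *\<^sub>R x"
proof -
  obtain b where B: "Basis = {b :: 'v}"
    using assms(1) by (metis card_1_singletonE)
  have repr: "x = (x \<bullet> b) *\<^sub>R b" for x :: 'v
    using euclidean_representation[of x] by (simp add: B)
  have "g x = (g b \<bullet> b) *\<^sub>R x" for x
  proof -
    have "g x = (x \<bullet> b) *\<^sub>R g b"
      by (metis repr assms(2) linear_scale)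
    also have "\<dots> = (x \<bullet> b) *\<^sub>R (g b \<bullet> b) *\<^sub>R b"
      by (metis repr)
    finally show ?thesis
      by (metis repr scaleR_scaleR mult.commute)
  qed
  then show thesis by (rule that)
qed

lemma rotation_scaleR_eq_zero:
  fixes u v :: "'a::real_vector"
  assumes "b \<noteq> 0"
    and "c *\<^sub>R u = a *\<^sub>R u - b *\<^sub>R v"
    and "c *\<^sub>R v = b *\<^sub>R u + a *\<^sub>R v"
  shows "u = 0 \<and> v = 0"
proof -
  have u: "(c - a) *\<^sub>R u = - (b *\<^sub>R v)" and v: "(c - a) *\<^sub>R v = b *\<^sub>R u"
    using assms(2,3) by (simp_all add: algebra_simps)
  have "(c - a) *\<^sub>R (c - a) *\<^sub>R u = - (b *\<^sub>R (c - a) *\<^sub>R v)"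
    by (simp add: u)
  also have "\<dots> = - (b * b) *\<^sub>R u"
    by (simp add: v)
  finally have "((c - a) * (c - a)) *\<^sub>R u + (b * b) *\<^sub>R u = 0"
    by simp
  then have "((c - a) * (c - a) + b * b) *\<^sub>R u = 0"
    by (simp only: scaleR_add_left)
  moreover have "(c - a) * (c - a) + b * b \<noteq> 0"
    using assms(1) by (simp add: add_nonneg_eq_0_iff)
  ultimately have "u = 0" by (metis scaleR_eq_0_iff)
  with assms show ?thesis by simp
qed

definition self_input :: "('s \<Rightarrow> 'c \<Rightarrow> 'c) \<Rightarrow> 'c \<Rightarrow> 'v::zero \<Rightarrow> 'v^'s" where
  "self_input Sg p y = (\<chi> s. if Sg s p = p then y else 0)"

lemma linear_self_input: "linear (self_input Sg p)"
  by (auto simp: linear_iff vec_eq_iff self_input_def)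

lemma admissible_component_self_input:
  assumes "\<And>s. Sg s p \<noteq> p \<Longrightarrow> x $ Sg s p = 0"
  shows "admissible Sg l x $ p = l (self_input Sg p (x $ p))"
proof -
  have "(\<chi> s. x $ Sg s p) = self_input Sg p (x $ p)"
    using assms by (auto simp: vec_eq_iff self_input_def)
  then show ?thesis by (simp add: admissible_def)
qed

lemma feedforward_admissible_eigenvalue_real:
  fixes Sg :: "'s::finite \<Rightarrow> 'c::finite \<Rightarrow> 'c" and l :: "'v::euclidean_space^'s \<Rightarrow> 'v"
  assumes "feedforward Sg" and "DIM('v) = 1" and "linear l"
    and "cplx_eigenvalue (admissible Sg l) mu"
  shows "Im mu = 0"
proof (rule ccontr)
  assume im: "Im mu \<noteq> 0"
  obtain u v :: "'v^'c" where nz: "u \<noteq> 0 \<or> v \<noteq> 0"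
    and eq_u: "admissible Sg l u = Re mu *\<^sub>R u - Im mu *\<^sub>R v"
    and eq_v: "admissible Sg l v = Im mu *\<^sub>R u + Re mu *\<^sub>R v"
    using assms(4) unfolding cplx_eigenvalue_def by blast
  define S where "S = {p. u $ p \<noteq> 0 \<or> v $ p \<noteq> 0}"
  from nz obtain p0 where "p0 \<in> S" by (auto simp: S_def vec_eq_iff)
  then obtain p where "p \<in> S" and minimal: "\<And>q. (q, p) \<in> input_rel Sg \<Longrightarrow> q \<notin> S"
    using wfE_min[OF wf_input_rel[OF assms(1)]] by blast
  obtain c where c: "\<And>y. l (self_input Sg p y) = c *\<^sub>R y"
    using linear_DIM_1_eq_scaleR[OF assms(2) linear_compose[OF linear_self_input assms(3)]]
    by (metis comp_apply)
  have "admissible Sg l w $ p = c *\<^sub>R w $ p" if "w = u \<or> w = v" for w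
  proof -
    have "w $ Sg s p = 0" if "Sg s p \<noteq> p" for s
      using minimal[of "Sg s p"] that \<open>w = u \<or> w = v\<close> by (auto simp: input_rel_def S_def)
    then show ?thesis by (simp add: admissible_component_self_input c)
  qed
  with eq_u eq_v have "c *\<^sub>R u $ p = Re mu *\<^sub>R u $ p - Im mu *\<^sub>R v $ p"
    and "c *\<^sub>R v $ p = Im mu *\<^sub>R u $ p + Re mu *\<^sub>R v $ p"
    by (metis vector_minus_component vector_add_component vector_scaleR_component)+
  with im have "u $ p = 0 \<and> v $ p = 0"
    by (rule rotation_scaleR_eq_zero)
  with \<open>p \<in> S\<close> show False by (simp add: S_def)
qed

lemma admissible_eigenvalue_imaginary_unit:
  fixes Sg :: "'s::finite \<Rightarrow> 'c::finite \<Rightarrow> 'c"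
  assumes "Sg s1 = id" and "DIM('v::euclidean_space) \<ge> 2"
  obtains l :: "'v::euclidean_space^'s \<Rightarrow> 'v" where "linear l" and "cplx_eigenvalue (admissible Sg l) \<i>"
proof -
  obtain b1 b2 :: 'v where b: "b1 \<in> Basis" "b2 \<in> Basis" "b1 \<noteq> b2"
    using assms(2) card_le_Suc0_iff_eq[OF finite_Basis] by (metis not_less_eq_eq numeral_2_eq_2)
  then have inner: "b1 \<bullet> b1 = 1" "b2 \<bullet> b2 = 1" "b1 \<bullet> b2 = 0" "b2 \<bullet> b1 = 0"
    by (auto simp: inner_Basis)
  define l where "l = (\<lambda>x::'v^'s. (x $ s1 \<bullet> b1) *\<^sub>R b2 - (x $ s1 \<bullet> b2) *\<^sub>R b1)"
  have "linear l"
    unfolding l_def by (auto simp: linear_iff inner_add_left algebra_simps)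
  moreover have "cplx_eigenvalue (admissible Sg l) \<i>"
    unfolding cplx_eigenvalue_def
  proof (intro exI conjI)
    show "(\<chi> p. b1) \<noteq> (0::'v^'c) \<or> (\<chi> p. - b2) \<noteq> (0::'v^'c)"
      using b by (auto simp: vec_eq_iff nonzero_Basis)
  qed (simp_all add: admissible_def l_def assms(1) inner vec_eq_iff)
  ultimately show thesis by (rule that)
qed

theorem theorem3p10:
  fixes Sg :: "'s::finite \<Rightarrow> 'c::finite \<Rightarrow> 'c" and s1 :: 's
  assumes "network Sg s1" and "feedforward Sg"
  shows "(DIM('v::euclidean_space) = 1 \<longrightarrow>
            (\<forall>l :: 'v^'s \<Rightarrow> 'v. \<forall>mu. linear l \<longrightarrow> cplx_eigenvalue (admissible Sg l) mu
               \<longrightarrow> Im mu = 0))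
       \<and> (DIM('v) \<ge> 2 \<longrightarrow>
            (\<exists>l :: 'v^'s \<Rightarrow> 'v. \<exists>mu. linear l \<and> cplx_eigenvalue (admissible Sg l) mu
               \<and> Im mu \<noteq> 0))"
proof (intro conjI impI allI)
  show "Im mu = 0"
    if "DIM('v) = 1" "linear l" "cplx_eigenvalue (admissible Sg l) mu" for l :: "'v^'s \<Rightarrow> 'v" and mu
    using feedforward_admissible_eigenvalue_real[OF assms(2) that] .
next
  assume "DIM('v) \<ge> 2"
  moreover have "Sg s1 = id" using assms(1) by (simp add: network_def)
  ultimately obtain l :: "'v^'s \<Rightarrow> 'v" where "linear l" "cplx_eigenvalue (admissible Sg l) \<i>"
    using admissible_eigenvalue_imaginary_unit by blast
  then show "\<exists>l :: 'v^'s \<Rightarrow> 'v. \<exists>mu. linear l \<and> cplx_eigenvalue (admissible Sg l) mu \<and> Im mu \<noteq> 0"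
    by force
qed

end
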